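(* Let $d$ be an even positive integer and $s$ a positive integer with $2s\leqslant d$. For every $\varepsilon,\gamma\in I^s\setminus\{\alpha,\omega\}$, $$ \mathrm{diam}(B_\varepsilon,B_\gamma)\leqslant\min\{d-s-\langle\varepsilon,\gamma\rangle,\ d-s-\langle\bar\varepsilon,\bar\gamma\rangle\}. $$
   Context: Let $I=\{0,1\}$; for binary vectors $|x|=\sum_i x_i$, $\langle x,y\rangle=\sum_i x_iy_i$, and $\bar x=(1-x_1,\ldots,1-x_n)$. For $x,y\in I^n$, $\mathrm{dist}(x,y)$ is the Hamming distance, and for $A,B\subseteq I^n$, $\mathrm{diam}(A,B)=\max\{\mathrm{dist}(a,b)\colon a\in A,b\in B\}$. Let $\alpha=(0,\ldots,0)$, $\omega=(1,\ldots,1)\in I^s$. For $\varepsilon\in I^s\setminus\{\alpha,\omega\}$ let $i=t(\varepsilon)$ be the unique index with $\varepsilon_i\neq\varepsilon_{i+1}=\cdots=\varepsilon_s$, and $A_\varepsilon=\{\varepsilon_1\}\times\cdots\times\{\varepsilon_i\}\times I^{s-1-i}\subseteq I^{s-1}$. Define subsets of $I^{d-s}$: $X_0=\{x\colon |x|\leqslant \frac d2-s\}$; $X_k=\{x\colon |x|=\frac d2-s+k\}$ for $0<k<s$; $X_s=\{x\colon |x|\geqslant \frac d2\}$. For $\varepsilon\in I^s\setminus\{\alpha,\omega\}$ set $B_\varepsilon=X_{|\varepsilon|}\cap(I^{d-2s+1}\times A_\varepsilon)$, where $I^{d-s}=I^{d-2s+1}\times I^{s-1}$. *)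

theory Defs
  imports Main
begin

text \<open>Binary vectors of length n are lists over {0,1} (as nat) of length n;
  coordinate i (1-indexed in the paper) is list position i-1.\<close>

definition binvec :: "nat \<Rightarrow> nat list set" where
  "binvec n = {x. length x = n \<and> set x \<subseteq> {0, 1}}"

definition wt :: "nat list \<Rightarrow> nat" where
  "wt x = sum_list x"

definition ip :: "nat list \<Rightarrow> nat list \<Rightarrow> nat" where
  "ip x y = sum_list (map2 (*) x y)"

definition compl :: "nat list \<Rightarrow> nat list" where
  "compl x = map (\<lambda>a. 1 - a) x"

definition hdist :: "nat list \<Rightarrow> nat list \<Rightarrow> nat" where
  "hdist x y = card {i. i < length x \<and> x ! i \<noteq> y ! i}"

definition diam :: "nat list set \<Rightarrow> nat list set \<Rightarrow> nat" where
  "diam A B = Max {hdist a b | a b. a \<in> A \<and> b \<in> B}"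

text \<open>t(e): the unique (1-indexed) i with e_i \<noteq> e_{i+1} = ... = e_s.
  In 0-indexed list positions: e!(i-1) \<noteq> e!i and e!j = e!i for i \<le> j < s.\<close>
definition tidx :: "nat list \<Rightarrow> nat" where
  "tidx e = (THE i. 0 < i \<and> i < length e \<and> e ! (i - 1) \<noteq> e ! i \<and>
                     (\<forall>j. i \<le> j \<and> j < length e \<longrightarrow> e ! j = e ! i))"

text \<open>A_e = {e_1} x ... x {e_i} x I^(s-1-i), a subset of I^(s-1).\<close>
definition Aset :: "nat \<Rightarrow> nat list \<Rightarrow> nat list set" where
  "Aset s e = {v \<in> binvec (s - 1). take (tidx e) v = take (tidx e) e}"

definition Xset :: "nat \<Rightarrow> nat \<Rightarrow> nat \<Rightarrow> nat list set" where
  "Xset d s k = {x \<in> binvec (d - s).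
      (if k = 0 then wt x \<le> d div 2 - s
       else if k < s then wt x = d div 2 - s + k
       else d div 2 \<le> wt x)}"

text \<open>B_e = X_{|e|} \<inter> (I^(d-2s+1) x A_e), with I^(d-s) = I^(d-2s+1) x I^(s-1).\<close>
definition Bset :: "nat \<Rightarrow> nat \<Rightarrow> nat list \<Rightarrow> nat list set" where
  "Bset d s e = {x \<in> Xset d s (wt e). drop (d - 2 * s + 1) x \<in> Aset s e}"

end

theory Submission
  imports Defs
begin

text \<open>Let x \<in> B_e and y \<in> B_g with, by symmetry, i = t(e) \<le> t(g). On a window of i
  coordinates x and y agree with e and g, and from coordinate i on e is constant. Counting
  coordinates gives dist(x,y) + <x,y> + <compl x, compl y> = d - s and
  dist(x,y) + 2<x,y> = |x| + |y|, and likewise for e and g. If e vanishes from i on, the window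
  yields <e,g> \<le> <x,y>; if e is 1 from i on, it yields <compl e, compl g> \<le> <compl x, compl y>.
  Because the weights satisfy |x| + |y| + s = d - s + |e| + |g|, the identities turn either of
  these inequalities into both bounds.\<close>

lemma binvec_nth_cases:
  assumes "x \<in> binvec n" "p < n"
  shows "x ! p = 0 \<or> x ! p = 1"
  using assms nth_mem unfolding binvec_def by fastforce

lemma finite_binvec: "finite (binvec n)"
  unfolding binvec_def using finite_lists_length_eq[of "{0, 1 :: nat}" n]
  by (simp add: conj_commute)

lemma hdist_eq_sum: "hdist x y = (\<Sum>p<length x. if x ! p = y ! p then 0 else 1)"
proof -
  have "{p. p < length x \<and> x ! p \<noteq> y ! p} = {p \<in> {..<length x}. x ! p \<noteq> y ! p}"
    by auto
  then show ?thesis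
    unfolding hdist_def by (simp add: sum.If_cases Int_def)
qed

lemma ip_eq_sum: "length x = length y \<Longrightarrow> ip x y = (\<Sum>p<length x. x ! p * y ! p)"
  unfolding ip_def by (simp add: sum_list_sum_nth atLeast0LessThan)

lemma wt_eq_sum: "wt x = (\<Sum>p<length x. x ! p)"
  unfolding wt_def by (simp add: sum_list_sum_nth atLeast0LessThan)

lemma hdist_commute: "length x = length y \<Longrightarrow> hdist x y = hdist y x"
  unfolding hdist_def by metis

lemma ip_commute: "ip x y = ip y x"
  unfolding ip_def by (simp add: zip_commute[of x y] comp_def case_prod_unfold mult.commute)

lemma ip_take_drop: "ip x y = ip (take n x) (take n y) + ip (drop n x) (drop n y)"
  unfolding ip_def by (metis append_take_drop_id drop_zip map_append sum_list_append take_zip)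

lemma wt_add_wt_compl: "set x \<subseteq> {0, 1} \<Longrightarrow> wt x + wt (compl x) = length x"
  by (induction x) (auto simp: wt_def compl_def)

lemma hdist_add_ip_add_ip_compl:
  assumes "x \<in> binvec n" "y \<in> binvec n"
  shows "hdist x y + ip x y + ip (compl x) (compl y) = n"
proof -
  have "hdist x y + ip x y + ip (compl x) (compl y)
      = (\<Sum>p<n. (if x ! p = y ! p then 0 else 1) + x ! p * y ! p + (1 - x ! p) * (1 - y ! p))"
    using assms by (simp add: binvec_def compl_def hdist_eq_sum ip_eq_sum sum.distrib)
  also have "\<dots> = (\<Sum>p<n. 1)"
    using binvec_nth_cases[OF assms(1)] binvec_nth_cases[OF assms(2)]
    by (intro sum.cong) fastforce+
  finally show ?thesis
    by simp
qed

lemma hdist_add_double_ip: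
  assumes "x \<in> binvec n" "y \<in> binvec n"
  shows "hdist x y + 2 * ip x y = wt x + wt y"
proof -
  have "hdist x y + 2 * ip x y = (\<Sum>p<n. (if x ! p = y ! p then 0 else 1) + 2 * (x ! p * y ! p))"
    using assms by (simp add: binvec_def hdist_eq_sum ip_eq_sum sum.distrib sum_distrib_left)
  also have "\<dots> = (\<Sum>p<n. x ! p + y ! p)"
    using binvec_nth_cases[OF assms(1)] binvec_nth_cases[OF assms(2)]
    by (intro sum.cong) fastforce+
  finally show ?thesis
    using assms by (simp add: binvec_def wt_eq_sum sum.distrib)
qed

lemma ip_le_ip_of_window:
  assumes "take i (drop k x) = take i e" "take i (drop k y) = take i g"
    and "set (drop i e) \<subseteq> {0}"
  shows "ip e g \<le> ip x y"
proof -
  have "ip (drop i e) (drop i g) = 0"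
    using assms(3) unfolding ip_def by (fastforce dest: set_zip_leftD)
  then have "ip e g = ip (take i (drop k x)) (take i (drop k y))"
    using ip_take_drop[of e g i] assms(1,2) by simp
  also have "\<dots> \<le> ip (drop k x) (drop k y)"
    using ip_take_drop[of "drop k x" "drop k y" i] by simp
  also have "\<dots> \<le> ip x y"
    using ip_take_drop[of x y k] by simp
  finally show ?thesis .
qed

lemma hdist_le_of_window:
  assumes "x \<in> binvec n" "y \<in> binvec n" "e \<in> binvec s" "g \<in> binvec s"
    and window: "take i (drop k x) = take i e" "take i (drop k y) = take i g"
    and tail: "set (drop i e) \<subseteq> {0} \<or> set (drop i e) \<subseteq> {1}"
    and weights: "wt x + wt y + s = n + wt e + wt g"
  shows "hdist x y \<le> min (n - ip e g) (n - ip (compl e) (compl g))"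
proof -
  have compl_window: "take i (drop k (compl x)) = take i (compl e)"
    "take i (drop k (compl y)) = take i (compl g)"
    using window unfolding compl_def by (metis drop_map take_map)+
  have "ip e g \<le> ip x y \<or> ip (compl e) (compl g) \<le> ip (compl x) (compl y)"
    using tail
  proof
    assume "set (drop i e) \<subseteq> {0}"
    then show ?thesis
      using ip_le_ip_of_window[OF window] by blast
  next
    assume "set (drop i e) \<subseteq> {1}"
    then have "set (drop i (compl e)) \<subseteq> {0}"
      unfolding compl_def by (auto simp: drop_map)
    then show ?thesis
      using ip_le_ip_of_window[OF compl_window] by blast
  qed
  then show ?thesis
    using hdist_add_ip_add_ip_compl[of x n y] hdist_add_double_ip[of x n y]
      hdist_add_ip_add_ip_compl[of e s g] hdist_add_double_ip[of e s g] assms(1-4) weights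
    by (elim disjE) linarith+
qed

definition is_last_change :: "nat list \<Rightarrow> nat \<Rightarrow> bool" where
  "is_last_change e i \<longleftrightarrow> 0 < i \<and> i < length e \<and> e ! (i - 1) \<noteq> e ! i \<and>
     (\<forall>j. i \<le> j \<and> j < length e \<longrightarrow> e ! j = e ! i)"

lemma is_last_change_unique:
  assumes "is_last_change e i" "is_last_change e k"
  shows "i = k"
proof -
  have False if "is_last_change e i" "is_last_change e k" "i < k" for i k
  proof -
    have const: "\<forall>j. i \<le> j \<and> j < length e \<longrightarrow> e ! j = e ! i"
      and "0 < k" "k < length e" "e ! (k - 1) \<noteq> e ! k"
      using that unfolding is_last_change_def by blast+
    moreover have "i \<le> k - 1" "k - 1 < length e"
      using \<open>i < k\<close> \<open>k < length e\<close> by simp_all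
    ultimately show False
      using \<open>i < k\<close> by (metis less_imp_le)
  qed
  then show ?thesis
    using assms by (cases i k rule: linorder_cases) auto
qed

lemma is_last_change_exists:
  assumes "a \<in> set e" "a \<noteq> last e"
  shows "\<exists>i. is_last_change e i"
proof -
  define n where "n = length e"
  define J where "J = {j. j < n \<and> e ! j \<noteq> e ! (n - 1)}"
  have "last e = e ! (n - 1)"
    using assms(1) by (metis empty_iff last_conv_nth list.set(1) n_def)
  then have "J \<noteq> {}"
    using assms by (auto simp: J_def n_def in_set_conv_nth)
  moreover have "finite J"
    by (simp add: J_def)
  ultimately have "Max J \<in> J" and Max_ge: "\<And>j. j \<in> J \<Longrightarrow> j \<le> Max J"
    by simp_all
  then have "Max J < n" "e ! Max J \<noteq> e ! (n - 1)"
    by (simp_all add: J_def)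
  then have "Max J < n - 1"
    by (cases "Max J = n - 1") auto
  have tail: "e ! j = e ! (n - 1)" if "Max J < j" "j < n" for j
    using Max_ge[of j] that unfolding J_def by fastforce
  have "is_last_change e (Suc (Max J))"
    unfolding is_last_change_def n_def[symmetric]
  proof (intro conjI allI impI)
    show "Suc (Max J) < n"
      using \<open>Max J < n - 1\<close> by simp
    then have "e ! Suc (Max J) = e ! (n - 1)"
      using tail by blast
    then show "e ! (Suc (Max J) - 1) \<noteq> e ! Suc (Max J)"
      using \<open>e ! Max J \<noteq> e ! (n - 1)\<close> by simp
    show "e ! j = e ! Suc (Max J)" if "Suc (Max J) \<le> j \<and> j < n" for j
      using that tail \<open>e ! Suc (Max J) = e ! (n - 1)\<close> by (metis Suc_le_eq)
  qed simp
  then show ?thesis ..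
qed

lemma is_last_change_tidx:
  assumes "a \<in> set e" "a \<noteq> last e"
  shows "is_last_change e (tidx e)"
proof -
  obtain i where i: "is_last_change e i"
    using is_last_change_exists[OF assms] ..
  have "tidx e = (THE i. is_last_change e i)"
    unfolding tidx_def is_last_change_def ..
  also have "\<dots> = i"
    using i is_last_change_unique by blast
  finally show ?thesis
    using i by simp
qed

lemma set_drop_subset_last_change:
  assumes "is_last_change e i"
  shows "set (drop i e) \<subseteq> {e ! i}"
proof
  fix a assume "a \<in> set (drop i e)"
  then obtain p where "p < length e - i" "a = e ! (i + p)"
    by (auto simp: in_set_conv_nth)
  moreover have "\<forall>j. i \<le> j \<and> j < length e \<longrightarrow> e ! j = e ! i"
    using assms unfolding is_last_change_def by blast
  ultimately show "a \<in> {e ! i}"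
    by (metis le_add1 less_diff_conv add.commute singletonI)
qed

lemma zero_one_mem_binvec:
  assumes "e \<in> binvec s" "e \<noteq> replicate s 0" "e \<noteq> replicate s 1"
  shows "0 \<in> set e" "1 \<in> set e"
  using assms replicate_eqI[of e s 0] replicate_eqI[of e s 1] unfolding binvec_def by blast+

lemma is_last_change_tidx_binvec:
  assumes "e \<in> binvec s" "0 \<in> set e" "1 \<in> set e"
  shows "is_last_change e (tidx e)"
  using assms is_last_change_tidx[of 0 e] is_last_change_tidx[of 1 e] by (cases "last e = 0") auto

lemma wt_bounds_binvec:
  assumes "e \<in> binvec s" "0 \<in> set e" "1 \<in> set e"
  shows "0 < wt e" "wt e < s"
proof -
  show "0 < wt e"
    using member_le_sum_list[OF assms(3)] by (simp add: wt_def)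
  have "1 \<in> set (compl e)"
    using assms(2) by (force simp: compl_def)
  then have "0 < wt (compl e)"
    using member_le_sum_list by (fastforce simp: wt_def)
  then show "wt e < s"
    using wt_add_wt_compl[of e] assms(1) unfolding binvec_def by simp
qed

lemma mem_Bset_iff:
  assumes "e \<in> binvec s" "0 \<in> set e" "1 \<in> set e" "2 * s \<le> d"
  shows "x \<in> Bset d s e \<longleftrightarrow> x \<in> binvec (d - s) \<and> wt x = d div 2 - s + wt e \<and>
    take (tidx e) (drop (d - 2 * s + 1) x) = take (tidx e) e"
proof -
  have "0 < wt e" "wt e < s"
    using wt_bounds_binvec[OF assms(1-3)] by simp_all
  moreover have "drop (d - 2 * s + 1) x \<in> binvec (s - 1)" if "x \<in> binvec (d - s)"
    using that assms(4) \<open>wt e < s\<close> by (auto simp: binvec_def dest: in_set_dropD)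
  ultimately show ?thesis
    unfolding Bset_def Xset_def Aset_def by auto
qed

lemma Bset_nonempty:
  assumes "e \<in> binvec s" "0 \<in> set e" "1 \<in> set e" "2 * s \<le> d"
  shows "Bset d s e \<noteq> {}"
proof -
  \<comment> \<open>butlast e already meets the prefix condition of A_e; the weight of the dropped
    last entry is restored in the block of ones.\<close>
  define a where "a = d div 2 - s + last e"
  define x where "x = replicate a 1 @ replicate (d - 2 * s + 1 - a) 0 @ butlast e"
  have "e \<noteq> []" "set e \<subseteq> {0, 1}" "length e = s" "0 < s"
    using assms(1,2) by (auto simp: binvec_def)
  then have "last e \<le> 1"
    using last_in_set by fastforce
  then have "a \<le> d - 2 * s + 1"
    using assms(4) by (simp add: a_def)
  have "x \<in> binvec (d - s)"
    using \<open>a \<le> d - 2 * s + 1\<close> \<open>0 < s\<close> \<open>set e \<subseteq> {0, 1}\<close> \<open>length e = s\<close> assms(4)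
    by (auto simp: x_def binvec_def dest: in_set_butlastD)
  moreover have "wt x = d div 2 - s + wt e"
  proof -
    have "wt e = wt (butlast e) + last e"
      using append_butlast_last_id[OF \<open>e \<noteq> []\<close>] unfolding wt_def
      by (metis sum_list.Cons sum_list_append sum_list.Nil add_0_right)
    then show ?thesis
      by (simp add: x_def a_def wt_def sum_list_replicate)
  qed
  moreover have "take (tidx e) (drop (d - 2 * s + 1) x) = take (tidx e) e"
    using \<open>a \<le> d - 2 * s + 1\<close> is_last_change_tidx_binvec[OF assms(1-3)]
    by (simp add: x_def take_butlast is_last_change_def)
  ultimately show ?thesis
    using mem_Bset_iff[OF assms] by blast
qed

lemma hdist_Bset_le_of_tidx_le:
  assumes e: "e \<in> binvec s" "0 \<in> set e" "1 \<in> set e"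
    and g: "g \<in> binvec s" "0 \<in> set g" "1 \<in> set g"
    and "even d" "2 * s \<le> d" "x \<in> Bset d s e" "y \<in> Bset d s g" "tidx e \<le> tidx g"
  shows "hdist x y \<le> min (d - s - ip e g) (d - s - ip (compl e) (compl g))"
proof -
  let ?i = "tidx e" and ?k = "d - 2 * s + 1"
  have x: "x \<in> binvec (d - s)" "wt x = d div 2 - s + wt e" "take ?i (drop ?k x) = take ?i e"
    using assms(9) mem_Bset_iff[OF e \<open>2 * s \<le> d\<close>] by simp_all
  have y: "y \<in> binvec (d - s)" "wt y = d div 2 - s + wt g"
    "take (tidx g) (drop ?k y) = take (tidx g) g"
    using assms(10) mem_Bset_iff[OF g \<open>2 * s \<le> d\<close>] by simp_all
  then have "take ?i (drop ?k y) = take ?i g"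
    using \<open>tidx e \<le> tidx g\<close> by (metis min.absorb1 take_take)
  moreover have "set (drop ?i e) \<subseteq> {0} \<or> set (drop ?i e) \<subseteq> {1}"
  proof -
    have "is_last_change e ?i"
      using is_last_change_tidx_binvec[OF e] .
    then have "?i < s"
      using e(1) by (simp add: is_last_change_def binvec_def)
    then show ?thesis
      using set_drop_subset_last_change[OF \<open>is_last_change e ?i\<close>] binvec_nth_cases[OF e(1)]
      by fastforce
  qed
  moreover have "wt x + wt y + s = d - s + wt e + wt g"
    using x(2) y(2) \<open>even d\<close> \<open>2 * s \<le> d\<close> by (elim evenE) simp
  ultimately show ?thesis
    using hdist_le_of_window[OF x(1) y(1) e(1) g(1) x(3)] by blast
qed

lemma hdist_Bset_le:
  assumes e: "e \<in> binvec s" "0 \<in> set e" "1 \<in> set e"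
    and g: "g \<in> binvec s" "0 \<in> set g" "1 \<in> set g"
    and "even d" "2 * s \<le> d" "x \<in> Bset d s e" "y \<in> Bset d s g"
  shows "hdist x y \<le> min (d - s - ip e g) (d - s - ip (compl e) (compl g))"
proof (cases "tidx e \<le> tidx g")
  case True
  then show ?thesis
    using hdist_Bset_le_of_tidx_le assms by blast
next
  case False
  then have "hdist y x \<le> min (d - s - ip g e) (d - s - ip (compl g) (compl e))"
    using hdist_Bset_le_of_tidx_le[OF g e] assms(7-10) by simp
  moreover have "length x = length y"
    using assms(9,10) mem_Bset_iff[OF e \<open>2 * s \<le> d\<close>] mem_Bset_iff[OF g \<open>2 * s \<le> d\<close>]
    by (simp add: binvec_def)
  ultimately show ?thesis
    by (simp add: hdist_commute ip_commute)
qed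

lemma diam_leI:
  assumes "finite A" "finite B" "A \<noteq> {}" "B \<noteq> {}" "\<And>a b. a \<in> A \<Longrightarrow> b \<in> B \<Longrightarrow> hdist a b \<le> r"
  shows "diam A B \<le> r"
proof -
  have "{hdist a b | a b. a \<in> A \<and> b \<in> B} = (\<lambda>(a, b). hdist a b) ` (A \<times> B)"
    by auto
  then show ?thesis
    unfolding diam_def using assms by simp
qed

theorem lemma4:
  fixes d s :: nat and e g :: "nat list"
  assumes "even d" "0 < d" "0 < s" "2 * s \<le> d"
    and "e \<in> binvec s" "e \<noteq> replicate s 0" "e \<noteq> replicate s 1"
    and "g \<in> binvec s" "g \<noteq> replicate s 0" "g \<noteq> replicate s 1"
  shows "diam (Bset d s e) (Bset d s g)
           \<le> min (d - s - ip e g) (d - s - ip (compl e) (compl g))"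
proof -
  have e: "e \<in> binvec s" "0 \<in> set e" "1 \<in> set e"
    and g: "g \<in> binvec s" "0 \<in> set g" "1 \<in> set g"
    using zero_one_mem_binvec assms(5-10) by auto
  have "finite (Bset d s e)" "finite (Bset d s g)"
    using finite_binvec by (auto intro: finite_subset simp: Bset_def Xset_def)
  then show ?thesis
    using Bset_nonempty[OF e assms(4)] Bset_nonempty[OF g assms(4)]
      hdist_Bset_le[OF e g assms(1,4)]
    by (intro diam_leI)
qed

end
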